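(* Let $\alpha>-1$, $\beta>-1$, $\omega_{\alpha,\beta}(x)=(1-x)^{\alpha}(1+x)^{\beta}$, and for $c>0$ let $\mathcal{F}_c^{(\alpha,\beta)}[\phi](x)=\int_{-1}^{1}e^{c(xy-1)}\phi(y)\omega_{\alpha,\beta}(y)dy$ on $L^2((-1,1),\omega_{\alpha,\beta}(x)dx)$. For each $n\ge0$ let $\psi_n^{(\alpha,\beta)}(\cdot;c)$ be an eigenfunction of $\mathcal{F}_c^{(\alpha,\beta)}$ with eigenvalue $\mu_n^{(\alpha,\beta)}(c)\neq0$, normalized so that $\int_{-1}^1(\psi_n^{(\alpha,\beta)}(x;c))^2\omega_{\alpha,\beta}(x)dx=(\mu_n^{(\alpha,\beta)}(c))^2$. Then $$\frac{\partial \mu_n^{(\alpha,\beta)}(c)}{\partial c}=\frac{1}{\mu_n^{(\alpha,\beta)}(c)}\left(\frac{I_n(c)}{c}-(\mu_n^{(\alpha,\beta)}(c))^2\right),\qquad I_n(c)=\int_{-1}^{1}v\,\psi_n^{(\alpha,\beta)}(v;c)\,\frac{\partial\psi_n^{(\alpha,\beta)}(v;c)}{\partial v}\,\omega_{\alpha,\beta}(v)\,dv.$$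
   Context: The eigenvalue $\mu_n^{(\alpha,\beta)}(c)$ and the eigenfunction $\psi_n^{(\alpha,\beta)}(v;c)$ are regarded as (differentiable) functions of the parameter $c>0$. *)

theory Defs
  imports "HOL-Analysis.Analysis"
begin

definition jacobi_weight :: "real \<Rightarrow> real \<Rightarrow> real \<Rightarrow> real" where
  "jacobi_weight \<alpha> \<beta> x = (1 - x) powr \<alpha> * (1 + x) powr \<beta>"

definition F_op :: "real \<Rightarrow> real \<Rightarrow> real \<Rightarrow> (real \<Rightarrow> real) \<Rightarrow> real \<Rightarrow> real" where
  "F_op \<alpha> \<beta> c \<phi> x =
     integral {-1..1} (\<lambda>y. exp (c * (x * y - 1)) * \<phi> y * jacobi_weight \<alpha> \<beta> y)"

definition I_int :: "real \<Rightarrow> real \<Rightarrow> (real \<Rightarrow> real) \<Rightarrow> real" where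
  "I_int \<alpha> \<beta> \<psi> = integral {-1..1} (\<lambda>v. v * \<psi> v * deriv \<psi> v * jacobi_weight \<alpha> \<beta> v)"

end

theory Submission
  imports Defs
begin

text \<open>The kernel \<open>exp (c (x y - 1))\<close> is symmetric in \<open>x\<close> and \<open>y\<close>, so \<open>F\<^sub>c\<close> is self-adjoint in
  \<open>L\<^sup>2(\<omega>)\<close>. Pairing the eigen-equations for the parameters \<open>t\<close> and \<open>c\<close> therefore gives the
  exact identity \<open>(\<mu>(t) - \<mu>(c)) \<langle>\<psi>\<^sub>c, \<psi>\<^sub>t\<rangle> = (t - c) \<langle>\<psi>\<^sub>t, D\<^sub>t \<psi>\<^sub>c\<rangle>\<close>, where \<open>D\<^sub>t\<close> is the
  difference quotient of \<open>F\<close> in the parameter. Both pairings are continuous in \<open>t\<close>, whence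
  \<open>\<mu>'(c) = \<langle>\<psi>\<^sub>c, \<partial>\<^sub>cF\<^sub>c \<psi>\<^sub>c\<rangle> / \<langle>\<psi>\<^sub>c, \<psi>\<^sub>c\<rangle>\<close> (Hellmann--Feynman); no differentiability of
  \<open>\<psi>\<close> in \<open>c\<close> is needed. Finally \<open>\<partial>\<^sub>c = (x/c) \<partial>\<^sub>x - 1\<close> on the kernel, and the eigen-equation
  turns \<open>\<partial>\<^sub>x F\<^sub>c \<psi>\<close> into \<open>\<mu> \<psi>'\<close>, which produces \<open>I\<^sub>n(c)/c - \<mu>\<^sup>2\<close>.\<close>

lemma jacobi_weight_nonneg: "jacobi_weight \<alpha> \<beta> x \<ge> 0"
  by (simp add: jacobi_weight_def)

lemma integrable_one_plus_powr:
  fixes b :: real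
  assumes "b > -1"
  shows "(\<lambda>x. (1 + x) powr b) integrable_on {-1..0}"
proof -
  have "((\<lambda>x. x powr b) has_integral (1 / (b + 1))) {0..1}"
    using has_integral_powr_from_0[OF assms, of 1] by simp
  from has_integral_affinity'[OF this[unfolded cbox_interval[symmetric]], of 1 1]
  show ?thesis by (auto simp: integrable_on_def add.commute)
qed

lemma jacobi_weight_integrable_on_left_half:
  assumes "\<alpha> > -1" "\<beta> > -1"
  shows "jacobi_weight \<alpha> \<beta> integrable_on {-1..0}"
proof -
  have cont: "continuous_on {-1..0} (\<lambda>x::real. (1 - x) powr \<alpha>)"
    by (intro continuous_intros) auto
  have "(\<lambda>x. (1 - x) powr \<alpha> * (1 + x) powr \<beta>) absolutely_integrable_on {-1..0}"
  proof (rule absolutely_integrable_bounded_measurable_product_real)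
    show "(\<lambda>x. (1 - x) powr \<alpha>) \<in> borel_measurable (lebesgue_on {-1..0})"
      by (rule continuous_imp_measurable_on_sets_lebesgue[OF cont]) auto
    show "bounded ((\<lambda>x. (1 - x) powr \<alpha>) ` {-1..0})"
      by (intro compact_imp_bounded compact_continuous_image cont) auto
    show "(\<lambda>x. (1 + x) powr \<beta>) absolutely_integrable_on {-1..0}"
      using integrable_one_plus_powr[OF assms(2)]
      by (intro nonnegative_absolutely_integrable_1) auto
  qed auto
  then show ?thesis
    unfolding jacobi_weight_def absolutely_integrable_on_def by blast
qed

lemma jacobi_weight_integrable:
  assumes "\<alpha> > -1" "\<beta> > -1"
  shows "jacobi_weight \<alpha> \<beta> integrable_on {-1..1}"
proof (rule Henstock_Kurzweil_Integration.integrable_combine[where c = 0])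
  show "jacobi_weight \<alpha> \<beta> integrable_on {-1..0}"
    using jacobi_weight_integrable_on_left_half[OF assms] .
  have "(\<lambda>x. jacobi_weight \<alpha> \<beta> (-x)) integrable_on {-1..-0}"
    using jacobi_weight_integrable_on_left_half[OF assms(2,1), unfolded jacobi_weight_def]
    by (simp add: jacobi_weight_def mult.commute)
  then show "jacobi_weight \<alpha> \<beta> integrable_on {0..1}"
    using Henstock_Kurzweil_Integration.integrable_reflect_real by blast
qed auto

lemma continuous_on_slice:
  assumes "continuous_on (A \<times> B) (\<lambda>(x, y). K x y)" "x \<in> A"
  shows "continuous_on B (K x)"
  using continuous_on_compose2[OF assms(1) continuous_on_Pair[OF continuous_on_const continuous_on_id]]
    assms(2) by auto

lemma exp_taylor_remainder_bound:
  fixes t z :: real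
  assumes "\<bar>z\<bar> \<le> 1"
  shows "\<bar>exp (t * (z - 1)) - (\<Sum>k<N. exp (-t) * t^k / fact k * z^k)\<bar>
         \<le> exp (-t) * exp \<bar>t\<bar> * (\<bar>t\<bar>^N / fact N)"
proof -
  have tz: "\<bar>t * z\<bar> \<le> \<bar>t\<bar>"
    using assms by (simp add: abs_mult mult_left_le)
  obtain s where s: "\<bar>s\<bar> \<le> \<bar>t * z\<bar>"
    and taylor: "exp (t * z) = (\<Sum>k<N. (t * z)^k / fact k) + exp s / fact N * (t * z)^N"
    using Maclaurin_exp_le[of "t * z" N] by blast
  have "exp (t * (z - 1)) - (\<Sum>k<N. exp (-t) * t^k / fact k * z^k)
      = exp (-t) * (exp (t * z) - (\<Sum>k<N. (t * z)^k / fact k))"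
    by (simp add: exp_diff right_diff_distrib sum_distrib_left power_mult_distrib
        field_simps exp_minus)
  also have "\<dots> = exp (-t) * (exp s / fact N * (t * z)^N)"
    by (simp add: taylor)
  finally have "\<bar>exp (t * (z - 1)) - (\<Sum>k<N. exp (-t) * t^k / fact k * z^k)\<bar>
      = exp (-t) * (exp s * (\<bar>t * z\<bar>^N / fact N))"
    by (simp add: abs_mult power_abs)
  also have "\<dots> \<le> exp (-t) * (exp \<bar>t\<bar> * (\<bar>t\<bar>^N / fact N))"
    using s tz by (intro mult_left_mono mult_mono divide_right_mono power_mono) auto
  finally show ?thesis
    by (simp add: mult.assoc)
qed

text \<open>Factoring differences of exponentials exactly through \<open>exprel\<close> turns each
  differentiability claim below into a continuity claim (Caratheodory's criterion).\<close>

definition exprel :: "real \<Rightarrow> real" where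
  "exprel u = (if u = 0 then 1 else (exp u - 1) / u)"

lemma exp_add_diff_eq_exprel: "exp (a + h) - exp a = h * exp a * exprel h"
  by (simp add: exprel_def exp_add field_simps)

lemma isCont_exprel: "isCont exprel u"
proof (cases "u = 0")
  case True
  have "((\<lambda>h::real. (exp h - 1) / h) \<longlongrightarrow> 1) (at 0)"
    using DERIV_exp[of 0] by (simp add: has_field_derivative_iff)
  then have "(exprel \<longlongrightarrow> 1) (at 0)"
    by (rule Lim_transform_eventually) (auto simp: exprel_def eventually_at_filter)
  then show ?thesis
    using True by (simp add: isCont_def exprel_def)
next
  case False
  have "\<forall>\<^sub>F h in nhds u. (exp h - 1) / h = exprel h"
    using eventually_nhds_in_open[of "-{0}" u] False
    by (auto elim!: eventually_mono simp: exprel_def)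
  moreover have "isCont (\<lambda>h. (exp h - 1) / h) u"
    using False by (intro continuous_intros) auto
  ultimately show ?thesis
    using isCont_cong[of "\<lambda>h. (exp h - 1) / h" exprel u] by simp
qed

lemma continuous_on_exprel [continuous_intros]:
  "continuous_on S f \<Longrightarrow> continuous_on S (\<lambda>x. exprel (f x))"
  using continuous_on_compose2[OF continuous_at_imp_continuous_on[OF ballI[OF isCont_exprel]]]
  by blast

lemma has_real_derivative_of_factorization:
  fixes f A B :: "real \<Rightarrow> real"
  assumes "\<forall>\<^sub>F t in at c. (f t - f c) * A t = (t - c) * B t"
    and "isCont A c" "isCont B c" "A c \<noteq> 0"
  shows "(f has_real_derivative B c / A c) (at c)"
proof -
  have "((\<lambda>t. B t / A t) \<longlongrightarrow> B c / A c) (at c)"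
    using assms(2-4) by (intro tendsto_divide) (auto simp: isCont_def)
  moreover have "\<forall>\<^sub>F t in at c. A t \<noteq> 0"
    using assms(2,4) by (auto simp: isCont_def intro: tendsto_imp_eventually_ne)
  then have "\<forall>\<^sub>F t in at c. B t / A t = (f t - f c) / (t - c)"
    using assms(1) eventually_neq_at_within[of c c UNIV]
    by eventually_elim (auto simp: field_simps)
  ultimately show ?thesis
    unfolding has_field_derivative_iff by (rule Lim_transform_eventually)
qed

locale jacobi_parameters =
  fixes \<alpha> \<beta> :: real
  assumes alpha_gt: "\<alpha> > -1" and beta_gt: "\<beta> > -1"
begin

definition weighted_integral :: "(real \<Rightarrow> real) \<Rightarrow> real" where
  "weighted_integral f = integral {-1..1} (\<lambda>x. f x * jacobi_weight \<alpha> \<beta> x)"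

definition weight_mass :: real where
  "weight_mass = integral {-1..1} (jacobi_weight \<alpha> \<beta>)"

lemma weight_mass_nonneg: "weight_mass \<ge> 0"
  unfolding weight_mass_def
  by (rule integral_nonneg[OF jacobi_weight_integrable[OF alpha_gt beta_gt]])
     (simp add: jacobi_weight_nonneg)

lemma integrable_weighted:
  assumes "continuous_on {-1..1} f"
  shows "(\<lambda>x. f x * jacobi_weight \<alpha> \<beta> x) integrable_on {-1..1}"
proof -
  have "(\<lambda>x. f x * jacobi_weight \<alpha> \<beta> x) absolutely_integrable_on {-1..1}"
  proof (rule absolutely_integrable_bounded_measurable_product_real)
    show "f \<in> borel_measurable (lebesgue_on {-1..1})"
      by (rule continuous_imp_measurable_on_sets_lebesgue[OF assms]) auto
    show "bounded (f ` {-1..1})"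
      by (intro compact_imp_bounded compact_continuous_image assms) auto
    show "jacobi_weight \<alpha> \<beta> absolutely_integrable_on {-1..1}"
      using jacobi_weight_integrable[OF alpha_gt beta_gt]
      by (intro nonnegative_absolutely_integrable_1) (auto simp: jacobi_weight_nonneg)
  qed auto
  then show ?thesis
    unfolding absolutely_integrable_on_def by blast
qed

lemma weighted_integral_add:
  assumes "continuous_on {-1..1} f" "continuous_on {-1..1} g"
  shows "weighted_integral (\<lambda>x. f x + g x) = weighted_integral f + weighted_integral g"
  unfolding weighted_integral_def distrib_right
  by (intro Henstock_Kurzweil_Integration.integral_add integrable_weighted assms)

lemma weighted_integral_diff:
  assumes "continuous_on {-1..1} f" "continuous_on {-1..1} g"
  shows "weighted_integral (\<lambda>x. f x - g x) = weighted_integral f - weighted_integral g"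
  unfolding weighted_integral_def left_diff_distrib
  by (intro Henstock_Kurzweil_Integration.integral_diff integrable_weighted assms)

lemma weighted_integral_cmult: "weighted_integral (\<lambda>x. c * f x) = c * weighted_integral f"
  by (simp add: weighted_integral_def mult.assoc)

lemma weighted_integral_sum:
  assumes "finite K" "\<And>k. k \<in> K \<Longrightarrow> continuous_on {-1..1} (f k)"
  shows "weighted_integral (\<lambda>x. \<Sum>k\<in>K. f k x) = (\<Sum>k\<in>K. weighted_integral (f k))"
  unfolding weighted_integral_def sum_distrib_right
  by (intro Henstock_Kurzweil_Integration.integral_sum integrable_weighted assms)

lemma weighted_integral_cong:
  "(\<And>x. x \<in> {-1..1} \<Longrightarrow> f x = g x) \<Longrightarrow> weighted_integral f = weighted_integral g"
  unfolding weighted_integral_def by (intro integral_cong) simp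

lemma abs_weighted_integral_le:
  assumes "continuous_on {-1..1} f" "\<And>x. x \<in> {-1..1} \<Longrightarrow> \<bar>f x\<bar> \<le> B"
  shows "\<bar>weighted_integral f\<bar> \<le> B * weight_mass"
proof -
  have "norm (weighted_integral f) \<le> integral {-1..1} (\<lambda>x. B * jacobi_weight \<alpha> \<beta> x)"
    unfolding weighted_integral_def
  proof (rule integral_norm_bound_integral[OF integrable_weighted[OF assms(1)]])
    show "(\<lambda>x. B * jacobi_weight \<alpha> \<beta> x) integrable_on {-1..1}"
      using integrable_weighted[of "\<lambda>_. B"] by simp
    show "norm (f x * jacobi_weight \<alpha> \<beta> x) \<le> B * jacobi_weight \<alpha> \<beta> x" if "x \<in> {-1..1}" for x
      using assms(2)[OF that] jacobi_weight_nonneg[of \<alpha> \<beta> x]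
      by (simp add: abs_mult mult_right_mono)
  qed
  then show ?thesis
    by (simp add: weight_mass_def)
qed

lemma continuous_on_weighted_integral:
  fixes k :: "'a::topological_space \<Rightarrow> real \<Rightarrow> real"
  assumes cont: "continuous_on (U \<times> {-1..1}) (\<lambda>(s, y). k s y)"
  shows "continuous_on U (\<lambda>s. weighted_integral (k s))"
  unfolding continuous_on_def
proof (intro ballI tendstoI)
  fix s0 and e :: real
  assume s0: "s0 \<in> U" and e: "e > 0"
  have k_cont: "continuous_on {-1..1} (k s)" if "s \<in> U" for s
    using continuous_on_slice[OF cont that] .
  define e' where "e' = e / (weight_mass + 1)"
  have "e' > 0"
    using e weight_mass_nonneg by (simp add: e'_def)
  then obtain X0 where "s0 \<in> X0" "open X0"
    and close: "\<And>s y. s \<in> X0 \<inter> U \<Longrightarrow> y \<in> {-1..1} \<Longrightarrow> dist (k s y) (k s0 y) \<le> e'"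
    using continuous_on_prod_compactE[OF cont compact_Icc s0] by (metis case_prod_conv)
  then have "\<forall>\<^sub>F s in at s0 within U. s \<in> X0 \<inter> U"
    by (auto simp: eventually_at_topological)
  then show "\<forall>\<^sub>F s in at s0 within U. dist (weighted_integral (k s)) (weighted_integral (k s0)) < e"
  proof eventually_elim
    case (elim s)
    have "dist (weighted_integral (k s)) (weighted_integral (k s0))
        = \<bar>weighted_integral (\<lambda>y. k s y - k s0 y)\<bar>"
      using elim s0 by (simp add: weighted_integral_diff k_cont dist_real_def)
    also have "\<dots> \<le> e' * weight_mass"
      using elim close
      by (intro abs_weighted_integral_le continuous_intros k_cont s0) (auto simp: dist_real_def)
    also have "\<dots> < e"
      using e weight_mass_nonneg by (simp add: e'_def field_simps)
    finally show ?case .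
  qed
qed

definition moment :: "nat \<Rightarrow> (real \<Rightarrow> real) \<Rightarrow> real" where
  "moment k f = weighted_integral (\<lambda>x. x^k * f x)"

definition kernel_form :: "(real \<Rightarrow> real \<Rightarrow> real) \<Rightarrow> (real \<Rightarrow> real) \<Rightarrow> (real \<Rightarrow> real) \<Rightarrow> real" where
  "kernel_form K \<theta> \<phi> = weighted_integral (\<lambda>x. \<theta> x * weighted_integral (\<lambda>y. K x y * \<phi> y))"

lemma continuous_on_kernel_transform:
  assumes "continuous_on ({-1..1} \<times> {-1..1}) (\<lambda>(x, y). K x y)" "continuous_on {-1..1} \<phi>"
  shows "continuous_on {-1..1} (\<lambda>x. weighted_integral (\<lambda>y. K x y * \<phi> y))"
proof (rule continuous_on_weighted_integral)
  have "continuous_on ({-1..1} \<times> {-1..1}) (\<lambda>p. (\<lambda>(x, y). K x y) p * \<phi> (snd p))"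
    by (intro continuous_intros assms continuous_on_compose2[OF assms(2)]) auto
  then show "continuous_on ({-1..1} \<times> {-1..1}) (\<lambda>(x, y). K x y * \<phi> y)"
    by (simp add: case_prod_beta)
qed

lemma kernel_form_polynomial:
  assumes "continuous_on {-1..1} \<theta>" "continuous_on {-1..1} \<phi>"
  shows "kernel_form (\<lambda>x y. \<Sum>k<N. a k * (x * y)^k) \<theta> \<phi>
       = (\<Sum>k<N. a k * moment k \<theta> * moment k \<phi>)"
proof -
  have inner: "weighted_integral (\<lambda>y. (\<Sum>k<N. a k * (x * y)^k) * \<phi> y)
      = (\<Sum>k<N. a k * x^k * moment k \<phi>)" for x
  proof -
    have "weighted_integral (\<lambda>y. (\<Sum>k<N. a k * (x * y)^k) * \<phi> y)
        = weighted_integral (\<lambda>y. \<Sum>k<N. a k * x^k * (y^k * \<phi> y))"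
      by (intro arg_cong[where f = weighted_integral] ext)
         (simp add: sum_distrib_left sum_distrib_right power_mult_distrib mult_ac)
    also have "\<dots> = (\<Sum>k<N. a k * x^k * moment k \<phi>)"
      by (simp add: weighted_integral_sum weighted_integral_cmult moment_def
          continuous_intros assms)
    finally show ?thesis .
  qed
  have "kernel_form (\<lambda>x y. \<Sum>k<N. a k * (x * y)^k) \<theta> \<phi>
      = weighted_integral (\<lambda>x. \<Sum>k<N. a k * moment k \<phi> * (x^k * \<theta> x))"
    unfolding kernel_form_def inner by (simp add: sum_distrib_left mult_ac)
  also have "\<dots> = (\<Sum>k<N. a k * moment k \<phi> * moment k \<theta>)"
    by (simp add: weighted_integral_sum weighted_integral_cmult moment_def
        continuous_intros assms)
  finally show ?thesis
    by (simp add: mult_ac)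
qed

lemma abs_kernel_form_diff_le:
  assumes K: "continuous_on ({-1..1} \<times> {-1..1}) (\<lambda>(x, y). K x y)"
    and L: "continuous_on ({-1..1} \<times> {-1..1}) (\<lambda>(x, y). L x y)"
    and \<theta>: "continuous_on {-1..1} \<theta>" and \<phi>: "continuous_on {-1..1} \<phi>"
    and KL: "\<And>x y. x \<in> {-1..1} \<Longrightarrow> y \<in> {-1..1} \<Longrightarrow> \<bar>K x y - L x y\<bar> \<le> d"
    and \<theta>_le: "\<And>x. x \<in> {-1..1} \<Longrightarrow> \<bar>\<theta> x\<bar> \<le> B\<^sub>\<theta>"
    and \<phi>_le: "\<And>y. y \<in> {-1..1} \<Longrightarrow> \<bar>\<phi> y\<bar> \<le> B\<^sub>\<phi>"
  shows "\<bar>kernel_form K \<theta> \<phi> - kernel_form L \<theta> \<phi>\<bar> \<le> B\<^sub>\<theta> * (d * B\<^sub>\<phi> * weight_mass) * weight_mass"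
proof -
  note transforms = continuous_on_kernel_transform[OF K \<phi>] continuous_on_kernel_transform[OF L \<phi>]
  have inner: "\<bar>weighted_integral (\<lambda>y. K x y * \<phi> y) - weighted_integral (\<lambda>y. L x y * \<phi> y)\<bar>
      \<le> d * B\<^sub>\<phi> * weight_mass" if x: "x \<in> {-1..1}" for x
  proof -
    have slices: "continuous_on {-1..1} (K x)" "continuous_on {-1..1} (L x)"
      using continuous_on_slice[OF K x] continuous_on_slice[OF L x] .
    then have "weighted_integral (\<lambda>y. K x y * \<phi> y) - weighted_integral (\<lambda>y. L x y * \<phi> y)
        = weighted_integral (\<lambda>y. (K x y - L x y) * \<phi> y)"
      by (simp add: weighted_integral_diff[symmetric] left_diff_distrib continuous_intros \<phi>)
    also have "\<bar>\<dots>\<bar> \<le> d * B\<^sub>\<phi> * weight_mass"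
      using KL[OF x] \<phi>_le
      by (intro abs_weighted_integral_le continuous_intros slices \<phi>)
         (auto simp: abs_mult intro!: mult_mono order_trans[OF abs_ge_zero KL[OF x]])
    finally show ?thesis .
  qed
  have "kernel_form K \<theta> \<phi> - kernel_form L \<theta> \<phi> = weighted_integral (\<lambda>x. \<theta> x *
      (weighted_integral (\<lambda>y. K x y * \<phi> y) - weighted_integral (\<lambda>y. L x y * \<phi> y)))"
    unfolding kernel_form_def right_diff_distrib
    by (simp add: weighted_integral_diff continuous_intros transforms \<theta>)
  also have "\<bar>\<dots>\<bar> \<le> B\<^sub>\<theta> * (d * B\<^sub>\<phi> * weight_mass) * weight_mass"
    using inner \<theta>_le
    by (intro abs_weighted_integral_le continuous_intros transforms \<theta>)
       (auto simp: abs_mult intro!: mult_mono order_trans[OF abs_ge_zero \<theta>_le])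
  finally show ?thesis .
qed

lemma kernel_form_tendsto:
  assumes K: "\<And>n. continuous_on ({-1..1} \<times> {-1..1}) (\<lambda>(x, y). K n x y)"
    and L: "continuous_on ({-1..1} \<times> {-1..1}) (\<lambda>(x, y). L x y)"
    and \<theta>: "continuous_on {-1..1} \<theta>" and \<phi>: "continuous_on {-1..1} \<phi>"
    and KL: "\<And>n x y. x \<in> {-1..1} \<Longrightarrow> y \<in> {-1..1} \<Longrightarrow> \<bar>K n x y - L x y\<bar> \<le> \<delta> n"
    and \<delta>: "\<delta> \<longlonglongrightarrow> 0"
  shows "(\<lambda>n. kernel_form (K n) \<theta> \<phi>) \<longlonglongrightarrow> kernel_form L \<theta> \<phi>"
proof -
  obtain B\<^sub>\<theta> where "\<And>x. x \<in> {-1..1} \<Longrightarrow> \<bar>\<theta> x\<bar> \<le> B\<^sub>\<theta>"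
    using continuous_on_compact_bound[OF compact_Icc \<theta>] by auto
  moreover obtain B\<^sub>\<phi> where "\<And>y. y \<in> {-1..1} \<Longrightarrow> \<bar>\<phi> y\<bar> \<le> B\<^sub>\<phi>"
    using continuous_on_compact_bound[OF compact_Icc \<phi>] by auto
  ultimately have "\<bar>kernel_form (K n) \<theta> \<phi> - kernel_form L \<theta> \<phi>\<bar>
      \<le> B\<^sub>\<theta> * (\<delta> n * B\<^sub>\<phi> * weight_mass) * weight_mass" for n
    using abs_kernel_form_diff_le[OF K L \<theta> \<phi> KL] by blast
  then have bound: "norm (kernel_form (K n) \<theta> \<phi> - kernel_form L \<theta> \<phi>)
      \<le> \<delta> n * (B\<^sub>\<theta> * B\<^sub>\<phi> * weight_mass\<^sup>2)" for n
    by (simp add: power2_eq_square mult_ac)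
  have "(\<lambda>n. kernel_form (K n) \<theta> \<phi> - kernel_form L \<theta> \<phi>) \<longlonglongrightarrow> 0"
    by (rule Lim_null_comparison[OF always_eventually[OF allI[OF bound]]
          tendsto_mult_left_zero[OF \<delta>]])
  then show ?thesis
    by (rule LIM_zero_cancel)
qed

lemma F_op_eq_weighted_integral:
  "F_op \<alpha> \<beta> c \<phi> x = weighted_integral (\<lambda>y. exp (c * (x * y - 1)) * \<phi> y)"
  by (simp add: F_op_def weighted_integral_def)

text \<open>The weight is singular at the endpoints, so symmetry is obtained by approximating the
  kernel uniformly by its separable Taylor polynomials in \<open>x y\<close> rather than by Fubini.\<close>

lemma weighted_integral_F_op_symmetric:
  assumes \<theta>: "continuous_on {-1..1} \<theta>" and \<phi>: "continuous_on {-1..1} \<phi>"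
  shows "weighted_integral (\<lambda>x. \<theta> x * F_op \<alpha> \<beta> t \<phi> x)
       = weighted_integral (\<lambda>x. \<phi> x * F_op \<alpha> \<beta> t \<theta> x)"
proof -
  define E where "E x y = exp (t * (x * y - 1))" for x y :: real
  define a where "a k = exp (-t) * t^k / fact k" for k
  define P where "P N x y = (\<Sum>k<N. a k * (x * y)^k)" for N and x y :: real
  define \<delta> where "\<delta> N = exp (-t) * exp \<bar>t\<bar> * (\<bar>t\<bar>^N / fact N)" for N
  have as_kernel_form: "weighted_integral (\<lambda>x. f x * F_op \<alpha> \<beta> t g x) = kernel_form E f g" for f g
    by (simp add: kernel_form_def F_op_eq_weighted_integral E_def)
  have E_cont: "continuous_on ({-1..1} \<times> {-1..1}) (\<lambda>(x, y). E x y)"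
    unfolding E_def case_prod_beta by (intro continuous_intros)
  have P_cont: "continuous_on ({-1..1} \<times> {-1..1}) (\<lambda>(x, y). P N x y)" for N
    unfolding P_def case_prod_beta by (intro continuous_intros)
  have P_approx: "\<bar>P N x y - E x y\<bar> \<le> \<delta> N" if "x \<in> {-1..1}" "y \<in> {-1..1}" for N x y
  proof -
    have "\<bar>x * y\<bar> \<le> 1"
      using that by (auto simp: abs_mult intro: mult_le_one)
    then show ?thesis
      using exp_taylor_remainder_bound[of "x * y" t N]
      unfolding P_def a_def E_def \<delta>_def by (subst abs_minus_commute)
  qed
  have "(\<lambda>N. \<bar>t\<bar>^N / fact N) \<longlonglongrightarrow> 0"
    using summable_LIMSEQ_zero[OF summable_exp[of "\<bar>t\<bar>"]] by (simp add: field_simps)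
  then have \<delta>_lim: "\<delta> \<longlonglongrightarrow> 0"
    unfolding \<delta>_def by (rule tendsto_mult_right_zero)
  have "(\<lambda>N. kernel_form (P N) \<theta> \<phi>) \<longlonglongrightarrow> kernel_form E \<theta> \<phi>"
    by (rule kernel_form_tendsto[OF P_cont E_cont \<theta> \<phi> P_approx \<delta>_lim])
  moreover have "(\<lambda>N. kernel_form (P N) \<phi> \<theta>) \<longlonglongrightarrow> kernel_form E \<phi> \<theta>"
    by (rule kernel_form_tendsto[OF P_cont E_cont \<phi> \<theta> P_approx \<delta>_lim])
  moreover have "kernel_form (P N) \<theta> \<phi> = kernel_form (P N) \<phi> \<theta>" for N
    unfolding P_def[abs_def] kernel_form_polynomial[OF \<theta> \<phi>] kernel_form_polynomial[OF \<phi> \<theta>]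
    by (simp add: mult_ac)
  ultimately show ?thesis
    unfolding as_kernel_form using LIMSEQ_unique by simp
qed

lemma weighted_integral_exp_diff:
  assumes "continuous_on {-1..1} a" "continuous_on {-1..1} d" "continuous_on {-1..1} \<phi>"
  shows "weighted_integral (\<lambda>y. exp (a y + h * d y) * \<phi> y) - weighted_integral (\<lambda>y. exp (a y) * \<phi> y)
       = h * weighted_integral (\<lambda>y. d y * exp (a y) * exprel (h * d y) * \<phi> y)"
proof -
  have "weighted_integral (\<lambda>y. exp (a y + h * d y) * \<phi> y) - weighted_integral (\<lambda>y. exp (a y) * \<phi> y)
      = weighted_integral (\<lambda>y. (exp (a y + h * d y) - exp (a y)) * \<phi> y)"
    by (simp add: weighted_integral_diff[symmetric] left_diff_distrib continuous_intros assms)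
  also have "\<dots> = h * weighted_integral (\<lambda>y. d y * exp (a y) * exprel (h * d y) * \<phi> y)"
    by (simp add: exp_add_diff_eq_exprel weighted_integral_cmult[symmetric] mult_ac)
  finally show ?thesis .
qed

definition F_op_dx :: "real \<Rightarrow> (real \<Rightarrow> real) \<Rightarrow> real \<Rightarrow> real" where
  "F_op_dx c \<phi> x = weighted_integral (\<lambda>y. c * y * exp (c * (x * y - 1)) * \<phi> y)"

definition F_op_dc :: "real \<Rightarrow> (real \<Rightarrow> real) \<Rightarrow> real \<Rightarrow> real" where
  "F_op_dc c \<phi> x = weighted_integral (\<lambda>y. (x * y - 1) * exp (c * (x * y - 1)) * \<phi> y)"

lemma F_op_dc_eq:
  assumes "continuous_on {-1..1} \<phi>" "c \<noteq> 0"
  shows "F_op_dc c \<phi> x = x / c * F_op_dx c \<phi> x - F_op \<alpha> \<beta> c \<phi> x"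
proof -
  have "x / c * F_op_dx c \<phi> x - F_op \<alpha> \<beta> c \<phi> x
      = weighted_integral (\<lambda>y. x / c * (c * y * exp (c * (x * y - 1)) * \<phi> y)
          - exp (c * (x * y - 1)) * \<phi> y)"
    by (simp add: F_op_dx_def F_op_eq_weighted_integral weighted_integral_cmult[symmetric]
        weighted_integral_diff continuous_intros assms)
  also have "\<dots> = F_op_dc c \<phi> x"
    unfolding F_op_dc_def using assms(2) by (simp add: field_simps)
  finally show ?thesis ..
qed

lemma continuous_on_F_op_dx:
  assumes "continuous_on {-1..1} \<phi>"
  shows "continuous_on S (F_op_dx c \<phi>)"
  unfolding F_op_dx_def
  by (intro continuous_on_weighted_integral)
     (auto simp: case_prod_beta intro!: continuous_intros continuous_on_compose2[OF assms])

lemma has_real_derivative_F_op: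
  assumes \<phi>: "continuous_on {-1..1} \<phi>"
  shows "(F_op \<alpha> \<beta> c \<phi> has_real_derivative F_op_dx c \<phi> x) (at x)"
proof -
  define g where "g s = weighted_integral
    (\<lambda>y. c * y * exp (c * (x * y - 1)) * exprel ((s - x) * (c * y)) * \<phi> y)" for s
  have "F_op \<alpha> \<beta> c \<phi> s - F_op \<alpha> \<beta> c \<phi> x = g s * (s - x)" for s
    using weighted_integral_exp_diff[of "\<lambda>y. c * (x * y - 1)" "\<lambda>y. c * y" \<phi> "s - x"] \<phi>
    by (simp add: F_op_eq_weighted_integral g_def algebra_simps continuous_intros)
  moreover have "continuous_on UNIV g"
    unfolding g_def
    by (intro continuous_on_weighted_integral)
       (auto simp: case_prod_beta intro!: continuous_intros continuous_on_compose2[OF \<phi>])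
  moreover have "g x = F_op_dx c \<phi> x"
    by (simp add: g_def F_op_dx_def exprel_def)
  ultimately show ?thesis
    unfolding CARAT_DERIV by (metis continuous_on_eq_continuous_at open_UNIV UNIV_I)
qed

lemma deriv_eigenfunction:
  assumes \<phi>: "continuous_on {-1..1} \<phi>" and m: "m \<noteq> 0"
    and eig: "\<And>x. x \<in> {-1..1} \<Longrightarrow> F_op \<alpha> \<beta> c \<phi> x = m * \<phi> x"
    and x: "x \<in> {-1<..<1}"
  shows "deriv \<phi> x = F_op_dx c \<phi> x / m"
proof -
  have "((\<lambda>s. F_op \<alpha> \<beta> c \<phi> s / m) has_real_derivative F_op_dx c \<phi> x / m) (at x)"
    by (intro DERIV_cdivide has_real_derivative_F_op \<phi>)
  then have "(\<phi> has_real_derivative F_op_dx c \<phi> x / m) (at x)"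
    by (rule has_field_derivative_transform_within_open[where S = "{-1<..<1}"])
       (use x m eig in auto)
  then show ?thesis
    by (rule DERIV_imp_deriv)
qed

lemma weighted_integral_eigenfunction_F_op_dc:
  assumes \<phi>: "continuous_on {-1..1} \<phi>" and c: "c \<noteq> 0" and m: "m \<noteq> 0"
    and eig: "\<And>x. x \<in> {-1..1} \<Longrightarrow> F_op \<alpha> \<beta> c \<phi> x = m * \<phi> x"
  shows "weighted_integral (\<lambda>x. \<phi> x * F_op_dc c \<phi> x)
       = m / c * I_int \<alpha> \<beta> \<phi> - m * weighted_integral (\<lambda>x. (\<phi> x)\<^sup>2)"
proof -
  define \<phi>' where "\<phi>' x = F_op_dx c \<phi> x / m" for x
  have \<phi>'_cont: "continuous_on {-1..1} \<phi>'"
    unfolding \<phi>'_def using m by (intro continuous_intros continuous_on_F_op_dx \<phi>) auto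
  have I: "I_int \<alpha> \<beta> \<phi> = weighted_integral (\<lambda>x. x * \<phi> x * \<phi>' x)"
    unfolding I_int_def weighted_integral_def
  proof (rule integral_spike[where S = "{-1, 1}"])
    fix x :: real
    assume "x \<in> {-1..1} - {-1, 1}"
    then show "x * \<phi> x * \<phi>' x * jacobi_weight \<alpha> \<beta> x
        = x * \<phi> x * deriv \<phi> x * jacobi_weight \<alpha> \<beta> x"
      using deriv_eigenfunction[OF \<phi> m eig] by (simp add: \<phi>'_def)
  qed auto
  have "weighted_integral (\<lambda>x. \<phi> x * F_op_dc c \<phi> x)
      = weighted_integral (\<lambda>x. m / c * (x * \<phi> x * \<phi>' x) - m * (\<phi> x)\<^sup>2)"
    using c m
    by (intro weighted_integral_cong) (simp add: F_op_dc_eq[OF \<phi> c] eig \<phi>'_def field_simps power2_eq_square)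
  also have "\<dots> = weighted_integral (\<lambda>x. m / c * (x * \<phi> x * \<phi>' x))
      - weighted_integral (\<lambda>x. m * (\<phi> x)\<^sup>2)"
    by (intro weighted_integral_diff continuous_intros \<phi> \<phi>'_cont)
  finally show ?thesis
    unfolding weighted_integral_cmult I .
qed

definition F_op_dc_quotient :: "real \<Rightarrow> real \<Rightarrow> (real \<Rightarrow> real) \<Rightarrow> real \<Rightarrow> real" where
  "F_op_dc_quotient c t \<phi> x = weighted_integral
     (\<lambda>y. (x * y - 1) * exp (c * (x * y - 1)) * exprel ((t - c) * (x * y - 1)) * \<phi> y)"

lemma F_op_eq_add_F_op_dc_quotient:
  assumes "continuous_on {-1..1} \<phi>"
  shows "F_op \<alpha> \<beta> t \<phi> x = F_op \<alpha> \<beta> c \<phi> x + (t - c) * F_op_dc_quotient c t \<phi> x"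
proof -
  have "c * (x * y - 1) + (t - c) * (x * y - 1) = t * (x * y - 1)" for y
    by algebra
  then have "F_op \<alpha> \<beta> t \<phi> x - F_op \<alpha> \<beta> c \<phi> x = (t - c) * F_op_dc_quotient c t \<phi> x"
    using weighted_integral_exp_diff[of "\<lambda>y. c * (x * y - 1)" "\<lambda>y. x * y - 1" \<phi> "t - c"]
    by (simp add: F_op_eq_weighted_integral F_op_dc_quotient_def continuous_intros assms)
  then show ?thesis
    by simp
qed

lemma F_op_dc_quotient_self: "F_op_dc_quotient c c \<phi> x = F_op_dc c \<phi> x"
  by (simp add: F_op_dc_quotient_def F_op_dc_def exprel_def)

lemma continuous_on_F_op_dc_quotient:
  assumes "continuous_on {-1..1} \<phi>"
  shows "continuous_on (UNIV \<times> {-1..1}) (\<lambda>(t, x). F_op_dc_quotient c t \<phi> x)"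
proof -
  have "continuous_on (UNIV \<times> {-1..1}) (\<lambda>p. weighted_integral (\<lambda>y. (snd p * y - 1)
      * exp (c * (snd p * y - 1)) * exprel ((fst p - c) * (snd p * y - 1)) * \<phi> y))"
    by (intro continuous_on_weighted_integral)
       (auto simp: case_prod_beta intro!: continuous_intros continuous_on_compose2[OF assms])
  then show ?thesis
    by (simp add: F_op_dc_quotient_def case_prod_beta)
qed

lemma eigenvalue_diff_factorization:
  assumes \<phi>\<^sub>0: "continuous_on {-1..1} \<phi>\<^sub>0" and \<phi>\<^sub>1: "continuous_on {-1..1} \<phi>\<^sub>1"
    and eig\<^sub>0: "\<And>x. x \<in> {-1..1} \<Longrightarrow> F_op \<alpha> \<beta> c \<phi>\<^sub>0 x = m\<^sub>0 * \<phi>\<^sub>0 x"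
    and eig\<^sub>1: "\<And>x. x \<in> {-1..1} \<Longrightarrow> F_op \<alpha> \<beta> t \<phi>\<^sub>1 x = m\<^sub>1 * \<phi>\<^sub>1 x"
  shows "(m\<^sub>1 - m\<^sub>0) * weighted_integral (\<lambda>x. \<phi>\<^sub>0 x * \<phi>\<^sub>1 x)
       = (t - c) * weighted_integral (\<lambda>x. \<phi>\<^sub>1 x * F_op_dc_quotient c t \<phi>\<^sub>0 x)"
proof -
  have quotient_cont: "continuous_on {-1..1} (F_op_dc_quotient c t \<phi>\<^sub>0)"
    using continuous_on_slice[OF continuous_on_F_op_dc_quotient[OF \<phi>\<^sub>0]] by simp
  have "m\<^sub>1 * weighted_integral (\<lambda>x. \<phi>\<^sub>0 x * \<phi>\<^sub>1 x)
      = weighted_integral (\<lambda>x. \<phi>\<^sub>0 x * F_op \<alpha> \<beta> t \<phi>\<^sub>1 x)"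
    unfolding weighted_integral_cmult[symmetric]
    by (intro weighted_integral_cong) (simp add: eig\<^sub>1)
  also have "\<dots> = weighted_integral (\<lambda>x. \<phi>\<^sub>1 x * F_op \<alpha> \<beta> t \<phi>\<^sub>0 x)"
    by (rule weighted_integral_F_op_symmetric[OF \<phi>\<^sub>0 \<phi>\<^sub>1])
  also have "\<dots> = weighted_integral (\<lambda>x. m\<^sub>0 * (\<phi>\<^sub>0 x * \<phi>\<^sub>1 x)
      + (t - c) * (\<phi>\<^sub>1 x * F_op_dc_quotient c t \<phi>\<^sub>0 x))"
    by (intro weighted_integral_cong)
       (simp add: F_op_eq_add_F_op_dc_quotient[OF \<phi>\<^sub>0, of t _ c] eig\<^sub>0 algebra_simps)
  also have "\<dots> = m\<^sub>0 * weighted_integral (\<lambda>x. \<phi>\<^sub>0 x * \<phi>\<^sub>1 x)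
      + (t - c) * weighted_integral (\<lambda>x. \<phi>\<^sub>1 x * F_op_dc_quotient c t \<phi>\<^sub>0 x)"
    unfolding weighted_integral_cmult[symmetric]
    by (intro weighted_integral_add continuous_intros \<phi>\<^sub>0 \<phi>\<^sub>1 quotient_cont)
  finally show ?thesis
    by (simp add: algebra_simps)
qed

lemma eigenvalue_has_real_derivative:
  fixes \<mu> :: "real \<Rightarrow> real" and \<psi> :: "real \<Rightarrow> real \<Rightarrow> real"
  assumes eigen: "\<And>t x. t > 0 \<Longrightarrow> x \<in> {-1..1} \<Longrightarrow> F_op \<alpha> \<beta> t (\<psi> t) x = \<mu> t * \<psi> t x"
    and \<psi>_cont: "continuous_on ({0<..} \<times> {-1..1}) (\<lambda>(t, x). \<psi> t x)"
    and c: "c > 0" and nontrivial: "weighted_integral (\<lambda>x. (\<psi> c x)\<^sup>2) \<noteq> 0"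
  shows "(\<mu> has_real_derivative
           weighted_integral (\<lambda>x. \<psi> c x * F_op_dc c (\<psi> c) x) / weighted_integral (\<lambda>x. (\<psi> c x)\<^sup>2))
         (at c)"
proof -
  have \<psi>_slice: "continuous_on {-1..1} (\<psi> t)" if "t > 0" for t
    using continuous_on_slice[OF \<psi>_cont] that by simp
  define A where "A t = weighted_integral (\<lambda>x. \<psi> c x * \<psi> t x)" for t
  define B where "B t = weighted_integral (\<lambda>x. \<psi> t x * F_op_dc_quotient c t (\<psi> c) x)" for t
  have A_cont: "continuous_on {0<..} A"
    unfolding A_def
    by (intro continuous_on_weighted_integral)
       (auto simp: case_prod_beta intro!: continuous_intros \<psi>_cont[unfolded case_prod_beta]
          continuous_on_compose2[OF \<psi>_slice[OF c]])
  have "continuous_on ({0<..} \<times> {-1..1}) (\<lambda>(t, x). F_op_dc_quotient c t (\<psi> c) x)"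
    by (rule continuous_on_subset[OF continuous_on_F_op_dc_quotient[OF \<psi>_slice[OF c]]]) auto
  then have B_cont: "continuous_on {0<..} B"
    unfolding B_def
    by (intro continuous_on_weighted_integral)
       (auto simp: case_prod_beta intro!: continuous_intros \<psi>_cont[unfolded case_prod_beta])
  have "isCont A c" "isCont B c"
    using A_cont B_cont c by (simp_all add: continuous_on_eq_continuous_at)
  moreover have "\<forall>\<^sub>F t in at c. t \<in> {0<..}"
    by (rule eventually_at_in_open') (use c in auto)
  then have "\<forall>\<^sub>F t in at c. (\<mu> t - \<mu> c) * A t = (t - c) * B t"
    unfolding A_def B_def
    by eventually_elim (auto intro!: eigenvalue_diff_factorization eigen \<psi>_slice c)
  moreover have "A c = weighted_integral (\<lambda>x. (\<psi> c x)\<^sup>2)"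
    unfolding A_def power2_eq_square ..
  moreover have "B c = weighted_integral (\<lambda>x. \<psi> c x * F_op_dc c (\<psi> c) x)"
    by (simp add: B_def F_op_dc_quotient_self)
  ultimately show ?thesis
    using has_real_derivative_of_factorization[of \<mu> c A B] nontrivial by simp
qed

end

theorem proposition1:
  fixes \<alpha> \<beta> :: real
    and \<mu> :: "real \<Rightarrow> real"            \<comment> \<open>c \<mapsto> mu_n(c)\<close>
    and \<psi> \<psi>c :: "real \<Rightarrow> real \<Rightarrow> real"  \<comment> \<open>c \<mapsto> v \<mapsto> psi_n(v;c), and its c-derivative\<close>
  assumes "\<alpha> > -1" and "\<beta> > -1"
    and eigen: "\<And>c x. c > 0 \<Longrightarrow> x \<in> {-1..1} \<Longrightarrow> F_op \<alpha> \<beta> c (\<psi> c) x = \<mu> c * \<psi> c x"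
    and nonzero: "\<And>c. c > 0 \<Longrightarrow> \<mu> c \<noteq> 0"
    and normal: "\<And>c. c > 0 \<Longrightarrow>
        integral {-1..1} (\<lambda>x. (\<psi> c x)\<^sup>2 * jacobi_weight \<alpha> \<beta> x) = (\<mu> c)\<^sup>2"
    and mu_diff: "\<And>c. c > 0 \<Longrightarrow> \<mu> differentiable (at c)"
    and psi_cont: "continuous_on ({0<..} \<times> {-1..1}) (\<lambda>(c, x). \<psi> c x)"
    and psi_dc: "\<And>c x. c > 0 \<Longrightarrow> x \<in> {-1..1} \<Longrightarrow>
        ((\<lambda>t. \<psi> t x) has_real_derivative \<psi>c c x) (at c)"
    and psic_cont: "continuous_on ({0<..} \<times> {-1..1}) (\<lambda>(c, x). \<psi>c c x)"
    and "c > 0"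
  shows "(\<mu> has_real_derivative
           (1 / \<mu> c) * (I_int \<alpha> \<beta> (\<psi> c) / c - (\<mu> c)\<^sup>2)) (at c)"
proof -
  interpret jacobi_parameters \<alpha> \<beta>
    by unfold_locales (use assms(1,2) in auto)
  have c: "c > 0" by fact
  have norm: "weighted_integral (\<lambda>x. (\<psi> c x)\<^sup>2) = (\<mu> c)\<^sup>2"
    using normal[OF c] by (simp add: weighted_integral_def)
  have derivative: "(\<mu> has_real_derivative
      weighted_integral (\<lambda>x. \<psi> c x * F_op_dc c (\<psi> c) x) / (\<mu> c)\<^sup>2) (at c)"
    using eigenvalue_has_real_derivative[OF eigen psi_cont c] norm nonzero[OF c] by simp
  have "weighted_integral (\<lambda>x. \<psi> c x * F_op_dc c (\<psi> c) x)
      = \<mu> c / c * I_int \<alpha> \<beta> (\<psi> c) - \<mu> c * (\<mu> c)\<^sup>2"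
    using weighted_integral_eigenfunction_F_op_dc[OF continuous_on_slice[OF psi_cont] _ nonzero eigen]
      c norm by simp
  then have "weighted_integral (\<lambda>x. \<psi> c x * F_op_dc c (\<psi> c) x) / (\<mu> c)\<^sup>2
      = (1 / \<mu> c) * (I_int \<alpha> \<beta> (\<psi> c) / c - (\<mu> c)\<^sup>2)"
    using nonzero[OF c] c by (simp add: field_simps power2_eq_square)
  with derivative show ?thesis
    by simp
qed

end
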